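(* For every $n\ge 3$, $\lceil \log_2 n\rceil\le \mathrm{isat}(n,\mathcal{N})\le 2n$.
   Context: $\mathcal{B}_n$ denotes the Boolean lattice $(2^{[n]},\subseteq)$. A family $\mathcal{F}\subseteq 2^{[n]}$ (ordered by inclusion) is induced-$\mathcal{P}$-saturated if it contains no induced copy of $\mathcal{P}$ (an injection $f$ with $u\le v\iff f(u)\subseteq f(v)$) but every family $\mathcal{F}'$ with $\mathcal{F}\subsetneq\mathcal{F}'\subseteq 2^{[n]}$ contains one. $\mathrm{isat}(n,\mathcal{P})$ is the minimum size of an induced-$\mathcal{P}$-saturated family in $\mathcal{B}_n$. $\mathcal{N}$ is the four-element poset on $\{A,B,C,D\}$ whose only strict relations are $A<B$, $C<B$, $C<D$ (so $A\parallel C$, $A\parallel D$, $B\parallel D$). *)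

theory Defs
  imports Complex_Main
begin

text \<open>The Boolean lattice B_n is modelled as the power set of [n] = {1..n},
  ordered by inclusion. A family is a set of subsets of {1..n}.\<close>

datatype N_elt = NA | NB | NC | ND

definition N_le :: "N_elt \<Rightarrow> N_elt \<Rightarrow> bool" where
  "N_le u v \<longleftrightarrow> u = v \<or> (u = NA \<and> v = NB) \<or> (u = NC \<and> v = NB) \<or> (u = NC \<and> v = ND)"

definition contains_induced_N :: "'a set set \<Rightarrow> bool" where
  "contains_induced_N F \<longleftrightarrow>
     (\<exists>f :: N_elt \<Rightarrow> 'a set. inj f \<and> (\<forall>u. f u \<in> F) \<and>
        (\<forall>u v. N_le u v \<longleftrightarrow> f u \<subseteq> f v))"

definition induced_N_saturated :: "nat \<Rightarrow> nat set set \<Rightarrow> bool" where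
  "induced_N_saturated n F \<longleftrightarrow>
     F \<subseteq> Pow {1..n} \<and> \<not> contains_induced_N F \<and>
     (\<forall>F'. F \<subset> F' \<and> F' \<subseteq> Pow {1..n} \<longrightarrow> contains_induced_N F')"

definition isat_N :: "nat \<Rightarrow> nat" where
  "isat_N n = (LEAST k. \<exists>F. induced_N_saturated n F \<and> card F = k)"

end

theory Submission
  imports Defs
begin

text \<open>Upper bound: the empty set, the singletons and the initial segments [1..k] (k \<ge> 2) form
  at most 2n sets. Two incomparable nonempty members have only initial segments as proper
  supersets, and these form a chain, so there is no induced N. Any other set S contains c < s;
  if 1 \<in> S, a gap a \<notin> S below max S gives the copy {max S} < S > {1} < [1..a], and otherwise
  {1} < [1..c] > {c} < S is a copy.

  Lower bound: if n > 2^|F|, two elements i \<noteq> j of [n] lie in exactly the same members of F.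
  Removing i from a minimal member containing i (or, if there is none, adding i to a maximal
  member A) produces a set S \<notin> F related to every other member of F exactly as A is. As no two
  elements of N have the same up- and down-sets, S and A never occur together in an induced N,
  and an induced N through S can be moved to A. Hence F \<union> {S} is still N-free, so F is not
  saturated.\<close>

lemma N_elt_all: "(\<forall>u. P u) \<longleftrightarrow> P NA \<and> P NB \<and> P NC \<and> P ND"
  by (metis N_elt.exhaust)

lemma contains_induced_NI:
  assumes "A \<in> F" "B \<in> F" "C \<in> F" "D \<in> F"
    and "A \<subset> B" "C \<subset> B" "C \<subset> D"
    and "\<not> A \<subseteq> C" "\<not> C \<subseteq> A" "\<not> A \<subseteq> D" "\<not> D \<subseteq> A" "\<not> B \<subseteq> D" "\<not> D \<subseteq> B"
  shows "contains_induced_N F"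
proof -
  define f where "f u = (case u of NA \<Rightarrow> A | NB \<Rightarrow> B | NC \<Rightarrow> C | ND \<Rightarrow> D)" for u
  have "inj f"
    unfolding inj_def N_elt_all f_def using assms by auto
  moreover have "\<forall>u. f u \<in> F"
    unfolding N_elt_all f_def using assms by auto
  moreover have "\<forall>u v. N_le u v \<longleftrightarrow> f u \<subseteq> f v"
    unfolding N_elt_all f_def N_le_def using assms by auto
  ultimately show ?thesis
    unfolding contains_induced_N_def by blast
qed

lemma contains_induced_N_mono:
  "contains_induced_N F \<Longrightarrow> F \<subseteq> G \<Longrightarrow> contains_induced_N G"
  unfolding contains_induced_N_def by blast

subsection \<open>Clones and the lower bound\<close>

definition order_clone :: "'a set set \<Rightarrow> 'a set \<Rightarrow> 'a set \<Rightarrow> bool" where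
  "order_clone F A S \<longleftrightarrow>
     (\<forall>B\<in>F. B \<noteq> A \<longrightarrow> (B \<subseteq> S \<longleftrightarrow> B \<subseteq> A) \<and> (S \<subseteq> B \<longleftrightarrow> A \<subseteq> B))"

lemma N_le_separates:
  "u \<noteq> v \<Longrightarrow> \<exists>w. w \<noteq> u \<and> w \<noteq> v \<and> (N_le w u \<noteq> N_le w v \<or> N_le u w \<noteq> N_le v w)"
  by (cases u; cases v) (auto simp: N_le_def)

lemma not_contains_induced_N_insert_clone:
  assumes N_free: "\<not> contains_induced_N F" and "A \<in> F" "S \<notin> F"
    and clone: "order_clone F A S"
  shows "\<not> contains_induced_N (insert S F)"
proof
  assume "contains_induced_N (insert S F)"
  then obtain f :: "N_elt \<Rightarrow> 'a set" where inj: "inj f" and f_in: "\<forall>u. f u \<in> insert S F"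
    and f_le: "\<forall>u v. N_le u v \<longleftrightarrow> f u \<subseteq> f v"
    unfolding contains_induced_N_def by blast
  have "S \<in> range f"
    using N_free inj f_in f_le unfolding contains_induced_N_def by blast
  then obtain u where u: "f u = S" by blast
  have other: "f w \<in> F" if "w \<noteq> u" for w
    using f_in inj u that by (metis insertE injD)
  have A_not_in_range: "A \<notin> range f"
  proof
    assume "A \<in> range f"
    then obtain v where v: "f v = A" by blast
    have "u \<noteq> v" using u v \<open>A \<in> F\<close> \<open>S \<notin> F\<close> by auto
    then obtain w where "w \<noteq> u" "w \<noteq> v" and sep: "N_le w u \<noteq> N_le w v \<or> N_le u w \<noteq> N_le v w"
      using N_le_separates by blast
    then have "f w \<in> F" "f w \<noteq> A"
      using other v inj by (auto dest: injD)
    then show False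
      using sep clone f_le u v unfolding order_clone_def by auto
  qed
  define g where "g = f(u := A)"
  have "inj g"
    unfolding inj_def g_def using inj A_not_in_range by (auto dest: injD)
  moreover have "\<forall>w. g w \<in> F"
    unfolding g_def using other \<open>A \<in> F\<close> by simp
  moreover have "\<forall>w v. N_le w v \<longleftrightarrow> g w \<subseteq> g v"
  proof (intro allI)
    fix w v
    have "f x \<in> F \<and> f x \<noteq> A" if "x \<noteq> u" for x
      using other that A_not_in_range by blast
    then show "N_le w v \<longleftrightarrow> g w \<subseteq> g v"
      using f_le clone u unfolding g_def order_clone_def by (cases "w = u"; cases "v = u") auto
  qed
  ultimately show False
    using N_free unfolding contains_induced_N_def by blast
qed

lemma clone_by_removing:
  assumes "finite F" "A0 \<in> F" "i \<in> A0" "j \<noteq> i"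
    and twins: "\<And>B. B \<in> F \<Longrightarrow> i \<in> B \<longleftrightarrow> j \<in> B"
  shows "\<exists>A\<in>F. A - {i} \<notin> F \<and> order_clone F A (A - {i})"
proof -
  obtain A where A: "A \<in> F" "i \<in> A"
    and minimal: "\<And>B. B \<in> F \<Longrightarrow> i \<in> B \<Longrightarrow> B \<subseteq> A \<Longrightarrow> B = A"
    using finite_has_minimal[of "{B \<in> F. i \<in> B}"] assms(1-3) by auto
  have "j \<in> A" using twins A by blast
  have "A - {i} \<notin> F"
    using twins \<open>j \<in> A\<close> \<open>j \<noteq> i\<close> by blast
  moreover have "order_clone F A (A - {i})"
    unfolding order_clone_def
  proof (intro ballI impI conjI)
    fix B assume "B \<in> F" "B \<noteq> A"
    show "B \<subseteq> A - {i} \<longleftrightarrow> B \<subseteq> A"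
      using minimal[OF \<open>B \<in> F\<close>] \<open>B \<noteq> A\<close> by blast
    show "A - {i} \<subseteq> B \<longleftrightarrow> A \<subseteq> B"
      using twins[OF \<open>B \<in> F\<close>] \<open>j \<in> A\<close> \<open>j \<noteq> i\<close> by blast
  qed
  ultimately show ?thesis using A by blast
qed

lemma clone_by_adding:
  assumes "finite F" "F \<noteq> {}" and avoid: "\<And>B. B \<in> F \<Longrightarrow> i \<notin> B"
  shows "\<exists>A\<in>F. insert i A \<notin> F \<and> order_clone F A (insert i A)"
proof -
  obtain A where A: "A \<in> F" and maximal: "\<And>B. B \<in> F \<Longrightarrow> A \<subseteq> B \<Longrightarrow> A = B"
    using finite_has_maximal[of F] assms by auto
  have "insert i A \<notin> F" using avoid by blast
  moreover have "order_clone F A (insert i A)"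
    unfolding order_clone_def using avoid maximal by blast
  ultimately show ?thesis using A by blast
qed

lemma exists_twins:
  assumes "finite F" "2 ^ card F < card X"
  shows "\<exists>i\<in>X. \<exists>j\<in>X. i \<noteq> j \<and> (\<forall>B\<in>F. i \<in> B \<longleftrightarrow> j \<in> B)"
proof -
  have "\<not> inj_on (\<lambda>x. {B \<in> F. x \<in> B}) X"
  proof
    assume "inj_on (\<lambda>x. {B \<in> F. x \<in> B}) X"
    then have "card X \<le> card (Pow F)"
      using card_inj_on_le[of _ X "Pow F"] \<open>finite F\<close> by auto
    then show False
      using assms by (simp add: card_Pow)
  qed
  then obtain i j where "i \<in> X" "j \<in> X" "i \<noteq> j" "{B \<in> F. i \<in> B} = {B \<in> F. j \<in> B}"
    unfolding inj_on_def by blast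
  then show ?thesis
    by (auto simp: set_eq_iff)
qed

lemma exists_order_clone:
  assumes "finite F" "F \<noteq> {}" "F \<subseteq> Pow X" "i \<in> X" "i \<noteq> j"
    and twins: "\<And>B. B \<in> F \<Longrightarrow> i \<in> B \<longleftrightarrow> j \<in> B"
  shows "\<exists>A\<in>F. \<exists>S. S \<subseteq> X \<and> S \<notin> F \<and> order_clone F A S"
proof (cases "\<exists>A\<in>F. i \<in> A")
  case True
  then obtain A where "A \<in> F" "A - {i} \<notin> F" "order_clone F A (A - {i})"
    using clone_by_removing[OF \<open>finite F\<close> _ _ \<open>i \<noteq> j\<close>[symmetric] twins] by blast
  then show ?thesis
    using \<open>F \<subseteq> Pow X\<close> by (intro bexI[of _ A] exI[of _ "A - {i}"]) auto
next
  case False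
  then obtain A where "A \<in> F" "insert i A \<notin> F" "order_clone F A (insert i A)"
    using clone_by_adding[OF \<open>finite F\<close> \<open>F \<noteq> {}\<close>] by blast
  then show ?thesis
    using \<open>F \<subseteq> Pow X\<close> \<open>i \<in> X\<close> by (intro bexI[of _ A] exI[of _ "insert i A"]) auto
qed

lemma induced_N_saturated_nonempty: "induced_N_saturated n F \<Longrightarrow> F \<noteq> {}"
proof
  assume "induced_N_saturated n F" "F = {}"
  then have "contains_induced_N {{}::nat set}"
    unfolding induced_N_saturated_def by auto
  then obtain f :: "N_elt \<Rightarrow> nat set" where "inj f" "\<forall>u. f u \<in> {{}}"
    unfolding contains_induced_N_def by blast
  then show False by (metis N_elt.distinct(1) injD singletonD)
qed

lemma induced_N_saturated_card_lower:
  assumes sat: "induced_N_saturated n F"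
  shows "n \<le> 2 ^ card F"
proof (rule ccontr)
  assume "\<not> n \<le> 2 ^ card F"
  have F_sub: "F \<subseteq> Pow {1..n}" and N_free: "\<not> contains_induced_N F"
    using sat unfolding induced_N_saturated_def by blast+
  have "finite F"
    using F_sub by (rule finite_subset) simp
  then obtain i j where ij: "i \<in> {1..n}" "i \<noteq> j"
    and twins: "\<And>B. B \<in> F \<Longrightarrow> i \<in> B \<longleftrightarrow> j \<in> B"
    using exists_twins[of F "{1..n}"] \<open>\<not> n \<le> 2 ^ card F\<close> by auto
  then obtain A S where "A \<in> F" "S \<subseteq> {1..n}" "S \<notin> F" "order_clone F A S"
    using exists_order_clone[OF \<open>finite F\<close> induced_N_saturated_nonempty[OF sat] F_sub ij twins]
    by blast
  then have "\<not> contains_induced_N (insert S F)"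
    using not_contains_induced_N_insert_clone N_free by blast
  moreover have "contains_induced_N (insert S F)"
    using sat \<open>S \<notin> F\<close> \<open>S \<subseteq> {1..n}\<close> F_sub unfolding induced_N_saturated_def by blast
  ultimately show False by contradiction
qed

subsection \<open>A saturated family of size at most 2n\<close>

definition singletons_and_segments :: "nat \<Rightarrow> nat set set" where
  "singletons_and_segments n = insert {} ((\<lambda>i. {i}) ` {1..n} \<union> (\<lambda>k. {1..k}) ` {2..n})"

lemma card_singletons_and_segments:
  assumes "n \<ge> 1" shows "card (singletons_and_segments n) \<le> 2 * n"
proof -
  have "card (singletons_and_segments n) \<le> 1 + card ((\<lambda>i. {i}) ` {1..n} \<union> (\<lambda>k. {1..k}) ` {2..n})"
    unfolding singletons_and_segments_def by (simp add: card_insert_if)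
  also have "\<dots> \<le> 1 + (card ((\<lambda>i. {i}) ` {1..n}) + card ((\<lambda>k. {1..k}) ` {2..n}))"
    using card_Un_le by simp
  also have "\<dots> \<le> 1 + (card {1..n} + card {2..n})"
    using card_image_le[of "{1..n}" "\<lambda>i. {i}"] card_image_le[of "{2..n}" "\<lambda>k. {1..k}"] by simp
  also have "\<dots> \<le> 2 * n" using assms by simp
  finally show ?thesis .
qed

lemma singletons_and_segments_subset: "singletons_and_segments n \<subseteq> Pow {1..n}"
  unfolding singletons_and_segments_def by auto

lemma not_contains_induced_N_singletons_and_segments:
  "\<not> contains_induced_N (singletons_and_segments n)"
proof
  assume "contains_induced_N (singletons_and_segments n)"
  then obtain f :: "N_elt \<Rightarrow> nat set" where inj: "inj f"
    and f_in: "\<forall>u. f u \<in> singletons_and_segments n" and f_le: "\<forall>u v. N_le u v \<longleftrightarrow> f u \<subseteq> f v"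
    unfolding contains_induced_N_def by blast
  have segment: "\<exists>k. Y = {1..k}" if "X \<in> singletons_and_segments n" "Y \<in> singletons_and_segments n"
    "X \<noteq> {}" "X \<subset> Y" for X Y
    using that unfolding singletons_and_segments_def by auto
  have "f NA \<noteq> {}" "f NC \<noteq> {}"
    using f_le[rule_format, of NA NC] f_le[rule_format, of NC NA] by (auto simp: N_le_def)
  moreover have "f NA \<subset> f NB" "f NC \<subset> f ND"
    using f_le[rule_format, of NA NB] f_le[rule_format, of NC ND] inj
    by (auto simp: N_le_def dest: injD)
  ultimately obtain j k where "f NB = {1..j}" "f ND = {1..k}"
    using segment f_in by metis
  then have "f NB \<subseteq> f ND \<or> f ND \<subseteq> f NB"
    by (cases "j \<le> k") auto
  then show False
    using f_le by (auto simp: N_le_def)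
qed

lemma contains_induced_N_gap:
  assumes "1 \<in> S" "s \<in> S" "a \<notin> S" "1 < a" "a < (s::nat)"
  shows "contains_induced_N {{s}, S, {1}, {1..a}}"
proof (rule contains_induced_NI[of "{s}" _ S "{1}" "{1..a}"])
  have "1 \<in> {1..a}" "a \<in> {1..a}" "s \<notin> {1..a}" "s \<noteq> 1" "a \<noteq> 1" "a \<noteq> s"
    using assms by auto
  with assms(1-3) show "{s} \<subset> S" "{1} \<subset> S" "{1} \<subset> {1..a}"
    "\<not> {s} \<subseteq> {1}" "\<not> {1} \<subseteq> {s}" "\<not> {s} \<subseteq> {1..a}" "\<not> {1..a} \<subseteq> {s}"
    "\<not> S \<subseteq> {1..a}" "\<not> {1..a} \<subseteq> S"
    by blast+
qed simp_all

lemma contains_induced_N_without_1: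
  assumes "1 \<notin> S" "c \<in> S" "s \<in> S" "1 < c" "c < (s::nat)"
  shows "contains_induced_N {{1}, {1..c}, {c}, S}"
proof (rule contains_induced_NI[of "{1}" _ "{1..c}" "{c}" S])
  have "1 \<in> {1..c}" "c \<in> {1..c}" "s \<notin> {1..c}" "c \<noteq> 1" "1 \<noteq> c" "s \<noteq> c"
    using assms by auto
  with assms(1-3) show "{1} \<subset> {1..c}" "{c} \<subset> {1..c}" "{c} \<subset> S"
    "\<not> {1} \<subseteq> {c}" "\<not> {c} \<subseteq> {1}" "\<not> {1} \<subseteq> S" "\<not> S \<subseteq> {1}"
    "\<not> {1..c} \<subseteq> S" "\<not> S \<subseteq> {1..c}"
    by blast+
qed simp_all

lemma exists_gap_below_Max:
  assumes "finite S" "1 \<in> S" "0 \<notin> S" "S \<noteq> {1..Max S}"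
  shows "\<exists>a. a \<notin> S \<and> 1 < a \<and> a < Max (S::nat set)"
proof -
  have "S \<subseteq> {1..Max S}"
  proof
    fix x assume "x \<in> S"
    moreover from \<open>x \<in> S\<close> have "x \<noteq> 0"
      using assms(3) by metis
    ultimately show "x \<in> {1..Max S}"
      using assms(1) by simp
  qed
  then obtain a where "a \<in> {1..Max S}" "a \<notin> S"
    using assms(4) by blast
  moreover have "Max S \<in> S"
    using assms(1,2) Max_in by blast
  ultimately show ?thesis
    using assms(2) by (metis atLeastAtMost_iff le_neq_implies_less)
qed

lemma singleton_in_singletons_and_segments:
  "i \<in> {1..n} \<Longrightarrow> {i} \<in> singletons_and_segments n"
  unfolding singletons_and_segments_def by blast

lemma segment_in_singletons_and_segments:
  "k \<in> {2..n} \<Longrightarrow> {1..k} \<in> singletons_and_segments n"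
  unfolding singletons_and_segments_def by blast

lemma insert_contains_induced_N_singletons_and_segments:
  assumes S_sub: "S \<subseteq> {1..n}" and S_notin: "S \<notin> singletons_and_segments n"
  shows "contains_induced_N (insert S (singletons_and_segments n))"
proof -
  let ?F = "insert S (singletons_and_segments n)"
  have "finite S" "0 \<notin> S"
    using S_sub finite_subset by auto
  obtain x where "x \<in> S"
    using S_notin unfolding singletons_and_segments_def by blast
  moreover have "S \<noteq> {x}"
    using S_notin singleton_in_singletons_and_segments \<open>x \<in> S\<close> S_sub by blast
  ultimately obtain y where "y \<in> S" "y \<noteq> x"
    by blast
  then have "\<exists>c\<in>S. \<exists>s\<in>S. c < s"
    using \<open>x \<in> S\<close> by (meson linorder_neqE_nat)
  then obtain c s where cs: "c \<in> S" "s \<in> S" "c < s"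
    by blast
  have "1 \<le> c" "s \<le> n"
    using cs S_sub by auto
  show ?thesis
  proof (cases "1 \<in> S")
    case True
    have Max: "Max S \<in> S" "s \<le> Max S"
      using \<open>finite S\<close> cs by (auto intro: Max_in Max_ge)
    then have "Max S \<in> {2..n}"
      using \<open>1 \<le> c\<close> cs S_sub by auto
    then have "S \<noteq> {1..Max S}"
      using S_notin segment_in_singletons_and_segments by metis
    then obtain a where a: "a \<notin> S" "1 < a" "a < Max S"
      using exists_gap_below_Max \<open>finite S\<close> True \<open>0 \<notin> S\<close> by blast
    have "contains_induced_N {{Max S}, S, {1}, {1..a}}"
      using contains_induced_N_gap True Max a by blast
    moreover have "{Max S} \<in> ?F" "{1} \<in> ?F" "{1..a} \<in> ?F"
      using \<open>Max S \<in> {2..n}\<close> a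
      by (intro insertI2 singleton_in_singletons_and_segments segment_in_singletons_and_segments;
          simp)+
    then have "{{Max S}, S, {1}, {1..a}} \<subseteq> ?F"
      by (meson insert_subsetI insertI1 empty_subsetI)
    ultimately show ?thesis
      by (rule contains_induced_N_mono)
  next
    case False
    then have "1 < c"
      using \<open>1 \<le> c\<close> cs by (cases "c = 1") auto
    then have "contains_induced_N {{1}, {1..c}, {c}, S}"
      using contains_induced_N_without_1 False cs by blast
    moreover have "{1} \<in> ?F" "{1..c} \<in> ?F" "{c} \<in> ?F"
      using \<open>1 < c\<close> \<open>s \<le> n\<close> cs
      by (intro insertI2 singleton_in_singletons_and_segments segment_in_singletons_and_segments;
          simp)+
    then have "{{1}, {1..c}, {c}, S} \<subseteq> ?F"
      by (meson insert_subsetI insertI1 empty_subsetI)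
    ultimately show ?thesis
      by (rule contains_induced_N_mono)
  qed
qed

lemma induced_N_saturated_singletons_and_segments:
  "induced_N_saturated n (singletons_and_segments n)"
  unfolding induced_N_saturated_def
proof (intro conjI allI impI)
  fix F' assume "singletons_and_segments n \<subset> F' \<and> F' \<subseteq> Pow {1..n}"
  then obtain S where "S \<in> F'" "S \<notin> singletons_and_segments n" "S \<subseteq> {1..n}"
    "insert S (singletons_and_segments n) \<subseteq> F'"
    by blast
  then show "contains_induced_N F'"
    using insert_contains_induced_N_singletons_and_segments contains_induced_N_mono by blast
qed (fact singletons_and_segments_subset not_contains_induced_N_singletons_and_segments)+

lemma isat_N_le_card: "induced_N_saturated n F \<Longrightarrow> isat_N n \<le> card F"
  unfolding isat_N_def by (rule Least_le) blast

lemma isat_N_attained: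
  "induced_N_saturated n F \<Longrightarrow> \<exists>G. induced_N_saturated n G \<and> card G = isat_N n"
  unfolding isat_N_def by (rule LeastI_ex) blast

theorem theorem1p6:
  fixes n :: nat
  assumes "n \<ge> 3"
  shows "nat \<lceil>log 2 (real n)\<rceil> \<le> isat_N n \<and> isat_N n \<le> 2 * n"
proof
  have sat: "induced_N_saturated n (singletons_and_segments n)"
    by (rule induced_N_saturated_singletons_and_segments)
  then obtain F where "induced_N_saturated n F" "card F = isat_N n"
    using isat_N_attained by blast
  then have "n \<le> 2 ^ isat_N n"
    using induced_N_saturated_card_lower by metis
  then have "log 2 (real n) \<le> isat_N n"
    using log2_of_power_le assms by simp
  then show "nat \<lceil>log 2 (real n)\<rceil> \<le> isat_N n"
    by (simp add: ceiling_le_iff nat_le_iff)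
  show "isat_N n \<le> 2 * n"
    using isat_N_le_card[OF sat] card_singletons_and_segments[of n] assms by simp
qed

end
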